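(* Let $n\ge2$ and for $\lambda\in[-1,1]$ let $C_\lambda(\mathbf u)=\prod_{i=1}^n u_i\big[1+\lambda\prod_{i=1}^n(1-u_i)\big]$, $\mathbf u\in[0,1]^n$. Let $\alpha\in\{-1,1\}^n$ and $J=\{i\in\{1,\dots,n\}:\alpha_i=1\}$. If $|J|$ is even, then $C_\lambda$ is $I(\alpha)$ for every $\lambda\in[0,1]$; if $|J|$ is odd, then $C_\lambda$ is $I(\alpha)$ for every $\lambda\in[-1,0]$.
   Context: For $\alpha\in\{-1,1\}^n$ and a random vector $\mathbf X$, write $\alpha\mathbf X=(\alpha_1X_1,\dots,\alpha_nX_n)$; inequalities between vectors are componentwise. $\mathbf X$ is $I(\alpha)$ if for every $\mathbf x\in\mathbb R^n$, $\mathbb P[\alpha\mathbf X>\mathbf x\mid \alpha\mathbf X>\mathbf x']\le \mathbb P[\alpha\mathbf X>\mathbf x\mid \alpha\mathbf X>\mathbf x'']$ whenever $\mathbf x'\le\mathbf x''$ and $\mathbb P[\alpha\mathbf X>\mathbf x'']>0$. A copula is $I(\alpha)$ if a random vector with that distribution function is. $C_\lambda$ is an $n$-copula for each $\lambda\in[-1,1]$. *)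

theory Defs
  imports "HOL-Probability.Probability"
begin

text \<open>Random vectors in R^n are modelled by their distribution: a probability
measure M on the Borel sets of real^'n (the index type 'n is finite, n = CARD('n)).\<close>

definition upper_event :: "real^'n \<Rightarrow> real^'n \<Rightarrow> (real^'n) set" where
  "upper_event \<alpha> x = {y. \<forall>i. \<alpha>$i * y$i > x$i}"

definition cond_prob :: "'a measure \<Rightarrow> 'a set \<Rightarrow> 'a set \<Rightarrow> real" where
  "cond_prob M A B = measure M (A \<inter> B) / measure M B"

definition is_I :: "real^'n \<Rightarrow> (real^'n) measure \<Rightarrow> bool" where
  "is_I \<alpha> M \<longleftrightarrow>
     (\<forall>x x' x''. (\<forall>i. x'$i \<le> x''$i) \<and> measure M (upper_event \<alpha> x'') > 0 \<longrightarrow>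
        cond_prob M (upper_event \<alpha> x) (upper_event \<alpha> x')
          \<le> cond_prob M (upper_event \<alpha> x) (upper_event \<alpha> x''))"

text \<open>M is the distribution of a random vector whose distribution function is the
copula C (C is given on [0,1]^n and extended to R^n by clamping each coordinate).\<close>
definition has_copula_df :: "(real^'n) measure \<Rightarrow> (real^'n \<Rightarrow> real) \<Rightarrow> bool" where
  "has_copula_df M C \<longleftrightarrow> prob_space M \<and> sets M = sets borel \<and>
     (\<forall>x. measure M {y. \<forall>i. y$i \<le> x$i} = C (\<chi> i. max 0 (min 1 (x$i))))"

definition copula_I :: "real^'n \<Rightarrow> (real^'n \<Rightarrow> real) \<Rightarrow> bool" where
  "copula_I \<alpha> C \<longleftrightarrow> (\<forall>M. has_copula_df M C \<longrightarrow> is_I \<alpha> M)"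

definition C_lam :: "real \<Rightarrow> real^'n \<Rightarrow> real" where
  "C_lam l u = (\<Prod>i\<in>UNIV. u$i) * (1 + l * (\<Prod>i\<in>UNIV. 1 - u$i))"

end

theory Submission
  imports Defs
begin

(* Write \<phi>(u) = u(1 - u). Since C\<^sub>\<lambda>(u) = \<Prod> u\<^sub>i + \<lambda> \<Prod> \<phi>(u\<^sub>i) is a sum of two product
   functions, inclusion-exclusion gives P(a < X \<le> b) = \<Prod> (b\<^sub>i - a\<^sub>i) + \<lambda> \<Prod> (\<phi>(b\<^sub>i) - \<phi>(a\<^sub>i)).
   Up to a null set the event \<alpha>X > x is such a box with side lengths t\<^sub>i, and
   \<phi>(b\<^sub>i) - \<phi>(a\<^sub>i) = \<plusminus>t\<^sub>i(1 - t\<^sub>i) with the minus sign exactly for i \<in> J, so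
   P(\<alpha>X > x) = C\<^sub>\<mu>(t) with \<mu> = (-1)\<^bsup>|J|\<^esup> \<lambda>. Raising x' shrinks t, and for
   0 \<le> \<mu> \<le> 1 the conditional probability C\<^sub>\<mu>(min r t) / C\<^sub>\<mu>(t) is antitone in each side t\<^sub>j. *)

(* C\<^sub>\<mu>(min r u) / C\<^sub>\<mu>(u) as a function of the single side p = u\<^sub>j with \<rho> = r\<^sub>j, once the
   factors of the other coordinates are cancelled: \<beta> and \<beta>' are the products of 1 - u\<^sub>i
   and of 1 - min r\<^sub>i u\<^sub>i over i \<noteq> j. *)
definition capped_ratio :: "real \<Rightarrow> real \<Rightarrow> real \<Rightarrow> real \<Rightarrow> real \<Rightarrow> real" where
  "capped_ratio \<mu> \<beta> \<beta>' \<rho> p =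
     min \<rho> p * (1 + \<mu> * (1 - min \<rho> p) * \<beta>') / (p * (1 + \<mu> * (1 - p) * \<beta>))"

lemma capped_ratio_antimono_below_cap:
  assumes "0 < p" "p \<le> q" "q \<le> \<rho>" "q \<le> 1" "0 \<le> \<beta>" "\<beta> \<le> \<beta>'" "0 \<le> \<mu>"
  shows "capped_ratio \<mu> \<beta> \<beta>' \<rho> q \<le> capped_ratio \<mu> \<beta> \<beta>' \<rho> p"
proof -
  have den_pos: "0 < 1 + \<mu> * (1 - t) * \<beta>" if "t \<le> 1" for t
    using that assms by (simp add: add_pos_nonneg)
  have "0 \<le> (\<mu> * (1 - p) - \<mu> * (1 - q)) * (\<beta>' - \<beta>)"
    using assms by (intro mult_nonneg_nonneg) (auto simp: algebra_simps mult_left_mono)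
  then have "(1 + \<mu> * (1 - q) * \<beta>') * (1 + \<mu> * (1 - p) * \<beta>)
      \<le> (1 + \<mu> * (1 - p) * \<beta>') * (1 + \<mu> * (1 - q) * \<beta>)"
    by (simp add: algebra_simps)
  then show ?thesis
    using assms den_pos[of p] den_pos[of q] by (simp add: capped_ratio_def divide_simps)
qed

lemma capped_ratio_antimono_above_cap:
  assumes "0 \<le> \<rho>" "\<rho> \<le> p" "0 < p" "p \<le> q" "q \<le> 1" "0 \<le> \<beta>" "\<beta> \<le> 1" "0 \<le> \<beta>'" "0 \<le> \<mu>" "\<mu> \<le> 1"
  shows "capped_ratio \<mu> \<beta> \<beta>' \<rho> q \<le> capped_ratio \<mu> \<beta> \<beta>' \<rho> p"
proof -
  have "\<mu> * \<beta> * (p + q - 1) \<le> \<mu> * \<beta> * 1"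
    using assms by (intro mult_left_mono) auto
  also have "\<dots> \<le> 1"
    using assms by (simp add: mult_le_one)
  finally have "\<mu> * \<beta> * (p + q - 1) \<le> 1" .
  then have "0 \<le> (q - p) * (1 + \<mu> * \<beta> * (1 - p - q))"
    using assms by (intro mult_nonneg_nonneg) (auto simp: algebra_simps)
  also have "\<dots> = q * (1 + \<mu> * (1 - q) * \<beta>) - p * (1 + \<mu> * (1 - p) * \<beta>)"
    by (simp add: algebra_simps)
  finally have "p * (1 + \<mu> * (1 - p) * \<beta>) \<le> q * (1 + \<mu> * (1 - q) * \<beta>)"
    by simp
  moreover have "0 < p * (1 + \<mu> * (1 - p) * \<beta>)"
    using assms by (intro mult_pos_pos add_pos_nonneg) auto
  moreover have "0 \<le> \<rho> * (1 + \<mu> * (1 - \<rho>) * \<beta>')"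
    using assms by (intro mult_nonneg_nonneg add_nonneg_nonneg) auto
  ultimately show ?thesis
    using assms by (simp add: capped_ratio_def min_absorb1 order_trans[of \<rho> p q] divide_left_mono)
qed

lemma capped_ratio_antimono:
  assumes "0 < p" "p \<le> q" "q \<le> 1" "0 \<le> \<rho>" "0 \<le> \<beta>" "\<beta> \<le> \<beta>'" "\<beta>' \<le> 1" "0 \<le> \<mu>" "\<mu> \<le> 1"
  shows "capped_ratio \<mu> \<beta> \<beta>' \<rho> q \<le> capped_ratio \<mu> \<beta> \<beta>' \<rho> p"
proof -
  consider "q \<le> \<rho>" | "\<rho> \<le> p" | "p < \<rho>" "\<rho> < q" by linarith
  then show ?thesis
  proof cases
    case 3
    have "capped_ratio \<mu> \<beta> \<beta>' \<rho> q \<le> capped_ratio \<mu> \<beta> \<beta>' \<rho> \<rho>"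
      using 3 assms by (intro capped_ratio_antimono_above_cap) auto
    also have "\<dots> \<le> capped_ratio \<mu> \<beta> \<beta>' \<rho> p"
      using 3 assms by (intro capped_ratio_antimono_below_cap) auto
    finally show ?thesis .
  qed (use assms capped_ratio_antimono_below_cap capped_ratio_antimono_above_cap in auto)
qed

lemma inf_vec_nth [simp]: "inf x y $ i = min (x $ i) (y $ i)" for x y :: "real^'n"
  by (simp add: inf_vec_def inf_min)

lemma sup_vec_nth [simp]: "sup x y $ i = max (x $ i) (y $ i)" for x y :: "real^'n"
  by (simp add: sup_vec_def sup_max)

lemma C_lam_split_coordinate:
  "C_lam \<mu> u = u$j * (\<Prod>i\<in>-{j}. u$i) * (1 + \<mu> * (1 - u$j) * (\<Prod>i\<in>-{j}. 1 - u$i))"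
  unfolding C_lam_def Compl_eq_Diff_UNIV
  by (subst (1 2) prod.remove[of UNIV j]) (simp_all add: mult.assoc)

lemma C_lam_ratio_step:
  fixes u v r :: "real^'n"
  assumes "0 \<le> \<mu>" "\<mu> \<le> 1" and u_pos: "\<forall>i. 0 < u$i" and "v \<le> 1" and r_nonneg: "0 \<le> r"
    and "u$j \<le> v$j" and same: "\<forall>i. i \<noteq> j \<longrightarrow> u$i = v$i"
  shows "C_lam \<mu> (inf r v) / C_lam \<mu> v \<le> C_lam \<mu> (inf r u) / C_lam \<mu> u"
proof -
  have u_le_1: "u \<le> 1"
    using assms by (simp add: less_eq_vec_def) (metis order_trans)
  define P where "P w = (\<Prod>i\<in>-{j}. w$i)" for w :: "real^'n"
  define Q where "Q w = (\<Prod>i\<in>-{j}. 1 - w$i)" for w :: "real^'n"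
  have same_rest: "P v = P u" "Q v = Q u" "P (inf r v) = P (inf r u)" "Q (inf r v) = Q (inf r u)"
    unfolding P_def Q_def using same by (auto intro!: prod.cong)
  have ratio: "C_lam \<mu> (inf r w) / C_lam \<mu> w
      = P (inf r u) / P u * capped_ratio \<mu> (Q u) (Q (inf r u)) (r$j) (w$j)"
    if "w = u \<or> w = v" for w
    using that same_rest
    by (auto simp: C_lam_split_coordinate[of _ _ j] capped_ratio_def P_def Q_def ac_simps)
  have "capped_ratio \<mu> (Q u) (Q (inf r u)) (r$j) (v$j) \<le> capped_ratio \<mu> (Q u) (Q (inf r u)) (r$j) (u$j)"
  proof (rule capped_ratio_antimono)
    show "0 \<le> Q u" "Q u \<le> Q (inf r u)" "Q (inf r u) \<le> 1"
      unfolding Q_def using u_pos u_le_1 r_nonneg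
      by (auto simp: less_eq_vec_def less_imp_le min_le_iff_disj intro!: prod_nonneg prod_mono prod_le_1)
  qed (use assms in \<open>auto simp: less_eq_vec_def\<close>)
  moreover have "0 \<le> P (inf r u) / P u"
    unfolding P_def using u_pos r_nonneg
    by (auto simp: less_eq_vec_def less_imp_le intro!: divide_nonneg_nonneg prod_nonneg)
  ultimately have "P (inf r u) / P u * capped_ratio \<mu> (Q u) (Q (inf r u)) (r$j) (v$j)
      \<le> P (inf r u) / P u * capped_ratio \<mu> (Q u) (Q (inf r u)) (r$j) (u$j)"
    by (rule mult_left_mono)
  then show ?thesis
    using ratio[of u] ratio[of v] by simp
qed

lemma C_lam_ratio_antimono:
  fixes s s' r :: "real^'n"
  assumes "0 \<le> \<mu>" "\<mu> \<le> 1" and "\<forall>i. 0 < s$i" and "s \<le> s'" "s' \<le> 1" "0 \<le> r"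
  shows "C_lam \<mu> (inf r s') / C_lam \<mu> s' \<le> C_lam \<mu> (inf r s) / C_lam \<mu> s"
proof -
  define upd where "upd K = (\<chi> i. if i \<in> K then s'$i else s$i)" for K
  have "C_lam \<mu> (inf r (upd K)) / C_lam \<mu> (upd K) \<le> C_lam \<mu> (inf r s) / C_lam \<mu> s" for K
    using finite[of K]
  proof (induction K rule: finite_induct)
    case empty
    then show ?case by (simp add: upd_def)
  next
    case (insert j K)
    have "C_lam \<mu> (inf r (upd (insert j K))) / C_lam \<mu> (upd (insert j K))
        \<le> C_lam \<mu> (inf r (upd K)) / C_lam \<mu> (upd K)"
      using assms insert.hyps(2)
      by (intro C_lam_ratio_step[where j = j])
        (auto simp: upd_def less_eq_vec_def intro: less_le_trans order_trans)
    with insert.IH show ?case by linarith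
  qed
  from this[of UNIV] show ?thesis by (simp add: upd_def)
qed

definition partial_box :: "'n set \<Rightarrow> real^'n \<Rightarrow> real^'n \<Rightarrow> (real^'n) set" where
  "partial_box K a b = {y. \<forall>i. (i \<in> K \<longrightarrow> a$i < y$i) \<and> y$i \<le> b$i}"

lemma partial_box_borel [measurable]: "partial_box K a b \<in> sets borel"
  unfolding partial_box_def by measurable

lemma prod_if_insert_diff:
  fixes a b b' :: "'n::finite \<Rightarrow> 'a" and f :: "'a \<Rightarrow> 'b::comm_ring_1"
  assumes "j \<notin> K" "b' j = a j" "\<And>i. i \<noteq> j \<Longrightarrow> b' i = b i"
  shows "(\<Prod>i\<in>UNIV. if i \<in> K then f (b i) - f (a i) else f (b i))
       - (\<Prod>i\<in>UNIV. if i \<in> K then f (b' i) - f (a i) else f (b' i))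
       = (\<Prod>i\<in>UNIV. if i \<in> insert j K then f (b i) - f (a i) else f (b i))"
proof -
  define R where "R = (\<Prod>i\<in>UNIV - {j}. if i \<in> K then f (b i) - f (a i) else f (b i))"
  have "(\<Prod>i\<in>UNIV - {j}. if i \<in> K then f (b' i) - f (a i) else f (b' i)) = R"
    "(\<Prod>i\<in>UNIV - {j}. if i \<in> insert j K then f (b i) - f (a i) else f (b i)) = R"
    unfolding R_def by (intro prod.cong refl; simp add: assms)+
  then show ?thesis
    using assms(1,2) unfolding R_def by (subst (1 2 3) prod.remove[of UNIV j]) (simp_all add: left_diff_distrib)
qed

lemma measure_partial_box_product_cdf:
  fixes M :: "(real^'n) measure" and f g :: "real \<Rightarrow> real"
  assumes "finite_measure M" "sets M = sets borel"
    and cdf: "\<And>b. 0 \<le> b \<Longrightarrow> b \<le> 1 \<Longrightarrow> measure M {..b} = (\<Prod>i\<in>UNIV. f (b$i)) + l * (\<Prod>i\<in>UNIV. g (b$i))"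
    and "0 \<le> a" "a \<le> b" "b \<le> 1"
  shows "measure M (partial_box K a b) =
      (\<Prod>i\<in>UNIV. if i \<in> K then f (b$i) - f (a$i) else f (b$i))
      + l * (\<Prod>i\<in>UNIV. if i \<in> K then g (b$i) - g (a$i) else g (b$i))"
  using finite[of K] assms(4-6)
proof (induction K arbitrary: b rule: finite_induct)
  case empty
  have "partial_box {} a b = {..b}"
    by (auto simp: partial_box_def less_eq_vec_def)
  with empty cdf show ?case using order_trans by simp
next
  case (insert j K)
  interpret finite_measure M by fact
  define b' where "b' = (\<chi> i. if i = j then a$j else b$i)"
  have b': "a \<le> b'" "b' \<le> 1" "b'$j = a$j" "\<And>i. i \<noteq> j \<Longrightarrow> b'$i = b$i"
    using insert.prems by (auto simp: b'_def less_eq_vec_def intro: order_trans)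
  have "partial_box K a b' \<subseteq> partial_box K a b"
    using insert.prems by (auto simp: partial_box_def b'_def less_eq_vec_def) (metis order_trans)
  moreover have "partial_box (insert j K) a b = partial_box K a b - partial_box K a b'"
    by (auto simp: partial_box_def b'_def not_le)
  ultimately have "measure M (partial_box (insert j K) a b)
      = measure M (partial_box K a b) - measure M (partial_box K a b')"
    using assms(2) by (simp add: finite_measure_Diff)
  also have "\<dots> = (\<Prod>i\<in>UNIV. if i \<in> insert j K then f (b$i) - f (a$i) else f (b$i))
      + l * (\<Prod>i\<in>UNIV. if i \<in> insert j K then g (b$i) - g (a$i) else g (b$i))"
    using insert.IH[OF insert.prems] insert.IH[of b'] insert.prems b'
      prod_if_insert_diff[OF insert.hyps(2), of "($) b'" "($) a" "($) b" f]
      prod_if_insert_diff[OF insert.hyps(2), of "($) b'" "($) a" "($) b" g]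
    by (simp add: algebra_simps)
  finally show ?case .
qed

lemma C_lam_product_form: "C_lam l b = (\<Prod>i\<in>UNIV. b$i) + l * (\<Prod>i\<in>UNIV. b$i * (1 - b$i))"
  unfolding C_lam_def prod.distrib by (simp add: algebra_simps)

lemma measure_box_C_lam:
  assumes hM: "has_copula_df M (C_lam l)" and "0 \<le> a" "a \<le> b" "b \<le> 1"
  shows "measure M (partial_box UNIV a b)
      = (\<Prod>i\<in>UNIV. b$i - a$i) + l * (\<Prod>i\<in>UNIV. b$i * (1 - b$i) - a$i * (1 - a$i))"
proof -
  have cdf: "measure M {..u} = (\<Prod>i\<in>UNIV. u$i) + l * (\<Prod>i\<in>UNIV. u$i * (1 - u$i))"
    if "0 \<le> u" "u \<le> 1" for u
  proof -
    have "(\<chi> i. max 0 (min 1 (u$i))) = u" "{..u} = {y. \<forall>i. y$i \<le> u$i}"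
      using that by (auto simp: vec_eq_iff less_eq_vec_def)
    then have "measure M {..u} = C_lam l u"
      using hM unfolding has_copula_df_def by metis
    then show ?thesis
      by (simp add: C_lam_product_form)
  qed
  from hM have "finite_measure M" "sets M = sets borel"
    by (auto simp: has_copula_df_def prob_space_def)
  from measure_partial_box_product_cdf[OF this cdf, of a b UNIV] assms(2-4)
  show ?thesis by simp
qed

lemma measure_unit_cube_C_lam:
  fixes M :: "(real^'n) measure"
  assumes "has_copula_df M (C_lam l)"
  shows "measure M (partial_box UNIV 0 1) = 1"
  using measure_box_C_lam[OF assms, of 0 1] by (simp add: less_eq_vec_def zero_power)

lemma measure_box_C_lam_le:
  assumes hM: "has_copula_df M (C_lam l)" and "0 \<le> a" "a \<le> b" "b \<le> 1"
  shows "measure M (partial_box UNIV a b) \<le> (1 + \<bar>l\<bar>) * (\<Prod>i\<in>UNIV. b$i - a$i)"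
proof -
  have "\<bar>b$i * (1 - b$i) - a$i * (1 - a$i)\<bar> \<le> b$i - a$i" for i
  proof -
    have "b$i * (1 - b$i) - a$i * (1 - a$i) = (b$i - a$i) * (1 - a$i - b$i)"
      by (simp add: algebra_simps)
    moreover have "0 \<le> a$i" "a$i \<le> b$i" "b$i \<le> 1"
      using assms by (auto simp: less_eq_vec_def)
    then have "\<bar>1 - a$i - b$i\<bar> \<le> 1" "0 \<le> b$i - a$i"
      by auto
    ultimately show ?thesis
      by (simp add: abs_mult mult_left_le)
  qed
  then have "\<bar>\<Prod>i\<in>UNIV. b$i * (1 - b$i) - a$i * (1 - a$i)\<bar> \<le> (\<Prod>i\<in>UNIV. b$i - a$i)"
    unfolding abs_prod by (intro prod_mono) auto
  then have "l * (\<Prod>i\<in>UNIV. b$i * (1 - b$i) - a$i * (1 - a$i))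
      \<le> \<bar>l\<bar> * (\<Prod>i\<in>UNIV. b$i - a$i)"
    by (rule abs_le_D1[OF order_trans[OF eq_refl[OF abs_mult] mult_left_mono]]) simp
  then show ?thesis
    using measure_box_C_lam[OF assms] by (simp add: algebra_simps)
qed

lemma measure_level_set_C_lam:
  fixes M :: "(real^'n) measure"
  assumes hM: "has_copula_df M (C_lam l)"
  shows "measure M {y \<in> partial_box UNIV 0 1. y$j = c} = 0"
proof (cases "0 < c \<and> c \<le> 1")
  case False
  then have "{y \<in> partial_box UNIV 0 1. y$j = c} = {}"
    by (auto simp: partial_box_def)
  then show ?thesis by (metis measure_empty)
next
  case True
  have sets: "sets M = sets borel"
    using hM by (simp add: has_copula_df_def)
  interpret prob_space M
    using hM by (simp add: has_copula_df_def)
  have bound: "measure M {y \<in> partial_box UNIV 0 1. y$j = c} \<le> (1 + \<bar>l\<bar>) * e" if "0 < e" for e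
  proof -
    define a :: "real^'n" where "a = (\<chi> i. if i = j then max 0 (c - e) else 0)"
    define b :: "real^'n" where "b = (\<chi> i. if i = j then c else 1)"
    have ab: "0 \<le> a" "a \<le> b" "b \<le> 1"
      using True that by (auto simp: a_def b_def less_eq_vec_def)
    have "{y \<in> partial_box UNIV 0 1. y$j = c} \<subseteq> partial_box UNIV a b"
      using that by (auto simp: partial_box_def a_def b_def)
    then have "measure M {y \<in> partial_box UNIV 0 1. y$j = c} \<le> measure M (partial_box UNIV a b)"
      using sets by (intro finite_measure_mono) auto
    also have "\<dots> \<le> (1 + \<bar>l\<bar>) * (\<Prod>i\<in>UNIV. b$i - a$i)"
      by (rule measure_box_C_lam_le[OF hM ab])
    also have "(\<Prod>i\<in>UNIV. b$i - a$i) = c - max 0 (c - e)"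
      by (subst prod.remove[of UNIV j]) (auto simp: a_def b_def)
    also have "\<dots> \<le> e"
      by simp
    finally show ?thesis
      by (simp add: mult_left_mono)
  qed
  have "measure M {y \<in> partial_box UNIV 0 1. y$j = c} \<le> 0 + e" if "0 < e" for e
  proof -
    have "0 < 1 + \<bar>l\<bar>" by simp
    then show ?thesis
      using bound[of "e / (1 + \<bar>l\<bar>)"] that by simp
  qed
  then have "measure M {y \<in> partial_box UNIV 0 1. y$j = c} \<le> 0"
    by (rule field_le_epsilon)
  then show ?thesis
    by (simp add: measure_nonneg antisym)
qed

lemma AE_coordinate_neq_C_lam:
  fixes M :: "(real^'n) measure"
  assumes hM: "has_copula_df M (C_lam l)"
  shows "AE y in M. y \<in> partial_box UNIV 0 1 \<and> y$j \<noteq> c"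
proof -
  interpret prob_space M
    using hM by (simp add: has_copula_df_def)
  have sets: "sets M = sets borel"
    using hM by (simp add: has_copula_df_def)
  have "AE y in M. y \<in> partial_box UNIV 0 1"
    using AE_in_set_eq_1[of "partial_box UNIV 0 1"] measure_unit_cube_C_lam[OF hM] sets by simp
  moreover have "{y \<in> partial_box UNIV 0 1. y$j = c} \<in> null_sets M"
    using measure_level_set_C_lam[OF hM] sets
    by (intro null_setsI) (simp_all add: emeasure_eq_measure)
  then have "AE y in M. y \<notin> {y \<in> partial_box UNIV 0 1. y$j = c}"
    by (rule AE_not_in)
  ultimately show ?thesis
    by eventually_elim auto
qed

definition upper_sides :: "real^'n \<Rightarrow> real^'n \<Rightarrow> real^'n" where
  "upper_sides \<alpha> x = (\<chi> i. if \<alpha>$i = 1 then 1 - max 0 (min 1 (x$i)) else max 0 (min 1 (- x$i)))"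

lemma upper_sides_nth_bounds: "0 \<le> upper_sides \<alpha> x $ i" "upper_sides \<alpha> x $ i \<le> 1"
  by (auto simp: upper_sides_def)

lemma upper_sides_antimono:
  assumes "x \<le> x'"
  shows "upper_sides \<alpha> x' \<le> upper_sides \<alpha> x"
  unfolding less_eq_vec_def
proof
  fix i
  have "x$i \<le> x'$i"
    using assms by (simp add: less_eq_vec_def)
  then show "upper_sides \<alpha> x' $ i \<le> upper_sides \<alpha> x $ i"
    by (auto simp: upper_sides_def max_def min_def)
qed

lemma upper_sides_sup: "upper_sides \<alpha> (sup x x') = inf (upper_sides \<alpha> x) (upper_sides \<alpha> x')"
  by (auto simp: upper_sides_def vec_eq_iff)

lemma upper_event_Int: "upper_event \<alpha> x \<inter> upper_event \<alpha> x' = upper_event \<alpha> (sup x x')"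
  by (auto simp: upper_event_def)

lemma measure_upper_event_C_lam:
  fixes M :: "(real^'n) measure" and \<alpha> x :: "real^'n"
  assumes hM: "has_copula_df M (C_lam l)" and \<alpha>: "\<forall>i. \<alpha>$i = -1 \<or> \<alpha>$i = 1"
  shows "measure M (upper_event \<alpha> x) = C_lam ((-1) ^ card {i. \<alpha>$i = 1} * l) (upper_sides \<alpha> x)"
proof -
  interpret prob_space M
    using hM by (simp add: has_copula_df_def)
  have sets: "sets M = sets borel"
    using hM by (simp add: has_copula_df_def)
  define lo :: "real^'n" where "lo = (\<chi> i. if \<alpha>$i = 1 then max 0 (min 1 (x$i)) else 0)"
  define hi :: "real^'n" where "hi = (\<chi> i. if \<alpha>$i = 1 then 1 else max 0 (min 1 (- x$i)))"
  define t where "t = upper_sides \<alpha> x"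
  have "AE y in M. \<forall>i\<in>UNIV. y \<in> partial_box UNIV 0 1 \<and> y$i \<noteq> hi$i"
    by (intro AE_finite_allI AE_coordinate_neq_C_lam[OF hM]) simp
  then have "AE y in M. y \<in> upper_event \<alpha> x \<longleftrightarrow> y \<in> partial_box UNIV lo hi"
  proof eventually_elim
    case (elim y)
    have "\<alpha>$i * y$i > x$i \<longleftrightarrow> lo$i < y$i \<and> y$i \<le> hi$i" for i
    proof -
      have "0 < y$i" "y$i \<le> 1" "y$i \<noteq> hi$i"
        using elim by (auto simp: partial_box_def)
      then show ?thesis
        using \<alpha>[rule_format, of i]
        by (cases "\<alpha>$i = 1") (auto simp: lo_def hi_def max_def min_def)
    qed
    then show ?case
      by (simp add: upper_event_def partial_box_def)
  qed
  then have "measure M (upper_event \<alpha> x) = measure M (partial_box UNIV lo hi)"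
    using sets by (intro finite_measure_eq_AE) (auto simp: upper_event_def)
  also have "\<dots> = (\<Prod>i\<in>UNIV. hi$i - lo$i)
      + l * (\<Prod>i\<in>UNIV. hi$i * (1 - hi$i) - lo$i * (1 - lo$i))"
    by (rule measure_box_C_lam[OF hM]) (auto simp: lo_def hi_def less_eq_vec_def)
  also have "(\<Prod>i\<in>UNIV. hi$i - lo$i) = (\<Prod>i\<in>UNIV. t$i)"
    by (auto simp: lo_def hi_def t_def upper_sides_def intro!: prod.cong)
  also have "(\<Prod>i\<in>UNIV. hi$i * (1 - hi$i) - lo$i * (1 - lo$i))
      = (\<Prod>i\<in>UNIV. if \<alpha>$i = 1 then -1 else 1) * (\<Prod>i\<in>UNIV. t$i * (1 - t$i))"
    unfolding prod.distrib[symmetric]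
    by (auto simp: lo_def hi_def t_def upper_sides_def algebra_simps intro!: prod.cong)
  also have "(\<Prod>i\<in>UNIV. if \<alpha>$i = 1 then -1 else 1 :: real) = (-1) ^ card {i. \<alpha>$i = 1}"
    by (simp add: prod.If_cases)
  finally show ?thesis
    unfolding t_def C_lam_product_form by (simp add: algebra_simps)
qed

lemma copula_I_C_lam:
  fixes \<alpha> :: "real^'n"
  assumes \<alpha>: "\<forall>i. \<alpha>$i = -1 \<or> \<alpha>$i = 1"
    and "0 \<le> (-1) ^ card {i. \<alpha>$i = 1} * l" "(-1) ^ card {i. \<alpha>$i = 1} * l \<le> 1"
  shows "copula_I \<alpha> (C_lam l)"
  unfolding copula_I_def is_I_def
proof (intro allI impI)
  fix M :: "(real^'n) measure" and x x' x'' :: "real^'n"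
  assume hM: "has_copula_df M (C_lam l)"
    and x': "(\<forall>i. x'$i \<le> x''$i) \<and> 0 < measure M (upper_event \<alpha> x'')"
  define \<mu> :: real where "\<mu> = (-1) ^ card {i. \<alpha>$i = 1} * l"
  have cond: "cond_prob M (upper_event \<alpha> x) (upper_event \<alpha> z)
      = C_lam \<mu> (inf (upper_sides \<alpha> x) (upper_sides \<alpha> z)) / C_lam \<mu> (upper_sides \<alpha> z)" for z
    unfolding cond_prob_def upper_event_Int measure_upper_event_C_lam[OF hM \<alpha>] \<mu>_def upper_sides_sup ..
  have "\<forall>i. 0 < upper_sides \<alpha> x'' $ i"
  proof (rule ccontr)
    assume "\<not> (\<forall>i. 0 < upper_sides \<alpha> x'' $ i)"
    then obtain i where "upper_sides \<alpha> x'' $ i = 0"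
      using upper_sides_nth_bounds(1)[of \<alpha> x''] by (metis less_eq_real_def)
    then have "C_lam \<mu> (upper_sides \<alpha> x'') = 0"
      by (auto simp: C_lam_def intro!: prod_zero)
    with x' show False
      by (simp add: measure_upper_event_C_lam[OF hM \<alpha>] \<mu>_def)
  qed
  moreover have "upper_sides \<alpha> x'' \<le> upper_sides \<alpha> x'"
    using x' by (intro upper_sides_antimono) (simp add: less_eq_vec_def)
  ultimately show "cond_prob M (upper_event \<alpha> x) (upper_event \<alpha> x')
      \<le> cond_prob M (upper_event \<alpha> x) (upper_event \<alpha> x'')"
    unfolding cond using assms
    by (intro C_lam_ratio_antimono) (auto simp: \<mu>_def less_eq_vec_def upper_sides_nth_bounds)
qed

theorem mainTheorem8:
  fixes \<alpha> :: "real^'n"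
  assumes "CARD('n) \<ge> 2"
    and "\<forall>i. \<alpha>$i = -1 \<or> \<alpha>$i = 1"
  shows "(even (card {i. \<alpha>$i = 1}) \<longrightarrow> (\<forall>l\<in>{0..1}. copula_I \<alpha> (C_lam l)))
       \<and> (odd (card {i. \<alpha>$i = 1}) \<longrightarrow> (\<forall>l\<in>{-1..0}. copula_I \<alpha> (C_lam l)))"
  using copula_I_C_lam[OF assms(2)] by auto

end
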